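(* Let $k$ be a positive integer and let $G$ and $G'$ be graphs with maximum degree $2$ having the same number of vertices and the same number of edges. If every component of $G$ and every component of $G'$ is either a cycle with more than $k$ vertices or a path with at least $k-1$ vertices, then $\mathcal{D}_k(G)=\mathcal{D}_k(G')$.
   Context: All graphs are finite and simple. For a graph $G$, the $k$-deck $\mathcal{D}_k(G)$ is the multiset of isomorphism classes of the induced subgraphs $G[X]$ over all $k$-element subsets $X\subseteq V(G)$. A path component may have a single vertex (an isolated vertex is a path with $1$ vertex). *)

theory Defs
  imports Main "HOL-Library.Multiset"
begin

definition graph :: "'a set \<Rightarrow> 'a set set \<Rightarrow> bool" where
  "graph V E \<longleftrightarrow> finite V \<and> (\<forall>e\<in>E. e \<subseteq> V \<and> card e = 2)"

definition degree :: "'a set set \<Rightarrow> 'a \<Rightarrow> nat" where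
  "degree E v = card {e\<in>E. v \<in> e}"

definition max_degree_le :: "'a set \<Rightarrow> 'a set set \<Rightarrow> nat \<Rightarrow> bool" where
  "max_degree_le V E d \<longleftrightarrow> (\<forall>v\<in>V. degree E v \<le> d)"

definition induced_edges :: "'a set set \<Rightarrow> 'a set \<Rightarrow> 'a set set" where
  "induced_edges E X = {e\<in>E. e \<subseteq> X}"

definition graph_iso :: "'a set \<Rightarrow> 'a set set \<Rightarrow> 'b set \<Rightarrow> 'b set set \<Rightarrow> bool" where
  "graph_iso V E W F \<longleftrightarrow> (\<exists>f. bij_betw f V W \<and>
      (\<forall>u\<in>V. \<forall>v\<in>V. {u, v} \<in> E \<longleftrightarrow> {f u, f v} \<in> F))"

text \<open>Isomorphism class of a finite graph, represented by all isomorphic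
graphs on natural-number vertices (every finite graph has such copies).\<close>
definition iso_class :: "'a set \<Rightarrow> 'a set set \<Rightarrow> (nat set \<times> nat set set) set" where
  "iso_class V E = {(W, F). graph W F \<and> graph_iso V E W F}"

definition deck :: "nat \<Rightarrow> 'a set \<Rightarrow> 'a set set \<Rightarrow> (nat set \<times> nat set set) set multiset" where
  "deck k V E = image_mset (\<lambda>X. iso_class X (induced_edges E X))
                   (mset_set {X. X \<subseteq> V \<and> card X = k})"

definition adj :: "'a set set \<Rightarrow> 'a \<Rightarrow> 'a \<Rightarrow> bool" where
  "adj E u v \<longleftrightarrow> {u, v} \<in> E"

definition components :: "'a set \<Rightarrow> 'a set set \<Rightarrow> 'a set set" where
  "components V E = {{v\<in>V. (adj E)\<^sup>*\<^sup>* u v} | u. u \<in> V}"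

definition is_cycle :: "'a set \<Rightarrow> 'a set set \<Rightarrow> bool" where
  "is_cycle V E \<longleftrightarrow> (\<exists>vs. distinct vs \<and> length vs \<ge> 3 \<and> set vs = V \<and>
      E = {{vs ! i, vs ! ((i + 1) mod length vs)} | i. i < length vs})"

definition is_path :: "'a set \<Rightarrow> 'a set set \<Rightarrow> bool" where
  "is_path V E \<longleftrightarrow> (\<exists>vs. distinct vs \<and> length vs \<ge> 1 \<and> set vs = V \<and>
      E = {{vs ! i, vs ! (i + 1)} | i. i + 1 < length vs})"

end

theory Submission
  imports Defs "HOL-Library.FuncSet" "HOL-Number_Theory.Cong"
begin

text \<open>
  Label the vertices of a k-subset by \<open>0..<k\<close>. The atomic type of a labelling records which
  labels are identified and which are adjacent; injectivity and the isomorphism class of the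
  image can be read off it, so \<open>k!\<close> times each multiplicity in the k-deck is a sum of numbers of
  labellings of prescribed atomic type. By inversion over supersets these are determined by the
  numbers of labellings satisfying given sets \<open>T\<close> of atoms. Such a number factors over the
  connected pieces of \<open>T\<close>, and for connected \<open>T\<close> the image of a labelling is a connected set of
  at most k vertices. If all those sets induce paths, grouping the labellings by their image
  shows that the number depends only on the numbers \<open>c\<^sub>u\<close> of connected u-sets, \<open>u \<le> k\<close>.

  In a disjoint union of cycles longer than k and paths with at least \<open>k - 1\<close> vertices every
  connected set of at most k vertices induces a path; for \<open>1 \<le> u \<le> k\<close> a cycle on n vertices has n
  connected u-sets and a path on n vertices has \<open>n + 1 - u\<close>. Hence \<open>c\<^sub>u = |V| - (u - 1) p\<close> with
  \<open>p = |V| - |E|\<close> the number of path components, which is the same for both graphs.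
\<close>

lemma card_eq_sum_card_fibers:
  assumes "finite S" "finite B" "f ` S \<subseteq> B"
  shows "card S = (\<Sum>b\<in>B. card {x\<in>S. f x = b})"
  using sum.group[OF assms, of "\<lambda>_. 1::nat"] by simp

lemma card_PiE_restrict_split:
  assumes "A1 \<inter> A2 = {}"
  shows "card {f \<in> (A1 \<union> A2) \<rightarrow>\<^sub>E V. P (restrict f A1) \<and> Q (restrict f A2)}
       = card {g \<in> A1 \<rightarrow>\<^sub>E V. P g} * card {h \<in> A2 \<rightarrow>\<^sub>E V. Q h}"
proof -
  let ?S = "{f \<in> (A1 \<union> A2) \<rightarrow>\<^sub>E V. P (restrict f A1) \<and> Q (restrict f A2)}"
  let ?merge = "\<lambda>(g, h) x. if x \<in> A1 then g x else h x"
  have "bij_betw (\<lambda>f. (restrict f A1, restrict f A2)) ?S ({g \<in> A1 \<rightarrow>\<^sub>E V. P g} \<times> {h \<in> A2 \<rightarrow>\<^sub>E V. Q h})"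
  proof (rule bij_betwI[where g = ?merge])
    have "restrict (?merge (g, h)) A1 = g" "restrict (?merge (g, h)) A2 = h"
      if "g \<in> A1 \<rightarrow>\<^sub>E V" "h \<in> A2 \<rightarrow>\<^sub>E V" for g h
      using that assms by (auto simp: fun_eq_iff PiE_def extensional_def)
    then show "?merge \<in> {g \<in> A1 \<rightarrow>\<^sub>E V. P g} \<times> {h \<in> A2 \<rightarrow>\<^sub>E V. Q h} \<rightarrow> ?S"
      by (auto simp: PiE_def extensional_def Pi_def)
    show "(\<lambda>f. (restrict f A1, restrict f A2)) \<in> ?S \<rightarrow> {g \<in> A1 \<rightarrow>\<^sub>E V. P g} \<times> {h \<in> A2 \<rightarrow>\<^sub>E V. Q h}"
      by auto
  qed (use assms in \<open>auto simp: fun_eq_iff PiE_def extensional_def\<close>)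
  then show ?thesis
    by (simp add: bij_betw_same_card card_cartesian_product)
qed

section \<open>Labellings satisfying atomic constraints\<close>

datatype atom = AEq nat nat | AAdj nat nat

fun atom_vars :: "atom \<Rightarrow> nat set" where
  "atom_vars (AEq i j) = {i, j}"
| "atom_vars (AAdj i j) = {i, j}"

fun satisfies :: "'a set set \<Rightarrow> (nat \<Rightarrow> 'a) \<Rightarrow> atom \<Rightarrow> bool" where
  "satisfies E f (AEq i j) \<longleftrightarrow> f i = f j"
| "satisfies E f (AAdj i j) \<longleftrightarrow> {f i, f j} \<in> E"

definition atoms_on :: "nat set \<Rightarrow> atom set" where
  "atoms_on A = {a. atom_vars a \<subseteq> A}"

definition solutions :: "'a set set \<Rightarrow> 'a set \<Rightarrow> nat set \<Rightarrow> atom set \<Rightarrow> (nat \<Rightarrow> 'a) set" where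
  "solutions E V A T = {f \<in> A \<rightarrow>\<^sub>E V. \<forall>a\<in>T. satisfies E f a}"

lemma finite_atoms_on:
  assumes "finite A"
  shows "finite (atoms_on A)"
proof -
  have "atoms_on A \<subseteq> (\<lambda>(i, j). AEq i j) ` (A \<times> A) \<union> (\<lambda>(i, j). AAdj i j) ` (A \<times> A)"
  proof
    fix a assume "a \<in> atoms_on A"
    then show "a \<in> (\<lambda>(i, j). AEq i j) ` (A \<times> A) \<union> (\<lambda>(i, j). AAdj i j) ` (A \<times> A)"
      unfolding atoms_on_def by (cases a) auto
  qed
  then show ?thesis by (rule finite_subset) (simp add: assms)
qed

lemma finite_solutions: "finite A \<Longrightarrow> finite V \<Longrightarrow> finite (solutions E V A T)"
  unfolding solutions_def by (rule finite_subset[of _ "A \<rightarrow>\<^sub>E V"]) (auto simp: finite_PiE)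

lemma atom_vars_nonempty: "atom_vars a \<noteq> {}"
  by (cases a) auto

lemma satisfies_cong: "(\<And>x. x \<in> atom_vars a \<Longrightarrow> f x = g x) \<Longrightarrow> satisfies E f a = satisfies E g a"
  by (cases a) auto

lemma satisfies_restrict: "a \<in> atoms_on A \<Longrightarrow> satisfies E (restrict f A) a = satisfies E f a"
  unfolding atoms_on_def by (intro satisfies_cong) auto

lemma satisfies_eq_or_adj:
  assumes "satisfies E f a" "atom_vars a = {x, y}"
  shows "f x = f y \<or> {f x, f y} \<in> E"
  using assms by (cases a) (auto simp: doubleton_eq_iff insert_commute)

definition crosses :: "nat set \<Rightarrow> atom \<Rightarrow> bool" where
  "crosses A1 a \<longleftrightarrow> atom_vars a \<inter> A1 \<noteq> {} \<and> \<not> atom_vars a \<subseteq> A1"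

definition connected_atoms :: "nat set \<Rightarrow> atom set \<Rightarrow> bool" where
  "connected_atoms A T \<longleftrightarrow> (\<forall>A1. A1 \<subseteq> A \<longrightarrow> A1 \<noteq> {} \<longrightarrow> A1 \<noteq> A \<longrightarrow> (\<exists>a\<in>T. crosses A1 a))"

lemma crossesE:
  assumes "crosses A1 a" "a \<in> atoms_on A"
  obtains x y where "atom_vars a = {x, y}" "x \<in> A1" "y \<in> A - A1"
  using assms unfolding crosses_def atoms_on_def by (cases a) auto

lemma card_solutions_split:
  assumes "A1 \<subseteq> A" "T \<subseteq> atoms_on A" "\<forall>a\<in>T. \<not> crosses A1 a"
  shows "card (solutions E V A T)
       = card (solutions E V A1 (T \<inter> atoms_on A1)) * card (solutions E V (A - A1) (T \<inter> atoms_on (A - A1)))"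
proof -
  define A2 where "A2 = A - A1"
  have A_split: "A = A1 \<union> A2" "A1 \<inter> A2 = {}" using assms(1) unfolding A2_def by blast+
  have T_split: "T = (T \<inter> atoms_on A1) \<union> (T \<inter> atoms_on A2)"
    using assms(2,3) unfolding crosses_def atoms_on_def A2_def by auto
  have sat_split: "(\<forall>a\<in>T. satisfies E f a) \<longleftrightarrow>
      (\<forall>a\<in>T \<inter> atoms_on A1. satisfies E (restrict f A1) a) \<and>
      (\<forall>a\<in>T \<inter> atoms_on A2. satisfies E (restrict f A2) a)" for f
  proof -
    have "(\<forall>a\<in>T. satisfies E f a) \<longleftrightarrow>
        (\<forall>a\<in>T \<inter> atoms_on A1. satisfies E f a) \<and> (\<forall>a\<in>T \<inter> atoms_on A2. satisfies E f a)"
      using T_split by blast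
    then show ?thesis by (simp add: satisfies_restrict)
  qed
  have "card (solutions E V A T) = card {f \<in> (A1 \<union> A2) \<rightarrow>\<^sub>E V.
          (\<forall>a\<in>T \<inter> atoms_on A1. satisfies E (restrict f A1) a) \<and>
          (\<forall>a\<in>T \<inter> atoms_on A2. satisfies E (restrict f A2) a)}"
    unfolding solutions_def sat_split A_split(1) ..
  also have "\<dots> = card (solutions E V A1 (T \<inter> atoms_on A1)) * card (solutions E V A2 (T \<inter> atoms_on A2))"
    unfolding solutions_def by (rule card_PiE_restrict_split[OF A_split(2)])
  finally show ?thesis unfolding A2_def .
qed

definition connected_set :: "'a set set \<Rightarrow> 'a set \<Rightarrow> bool" where
  "connected_set E W \<longleftrightarrow> W \<noteq> {} \<and>
     (\<forall>W1. W1 \<subseteq> W \<longrightarrow> W1 \<noteq> {} \<longrightarrow> W1 \<noteq> W \<longrightarrow> (\<exists>x\<in>W1. \<exists>y\<in>W - W1. {x, y} \<in> E))"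

definition connected_sets :: "'a set set \<Rightarrow> 'a set \<Rightarrow> nat \<Rightarrow> 'a set set" where
  "connected_sets E V u = {W. W \<subseteq> V \<and> connected_set E W \<and> card W = u}"

lemma finite_connected_sets: "finite V \<Longrightarrow> finite (connected_sets E V u)"
  unfolding connected_sets_def by (rule finite_subset[of _ "Pow V"]) auto

lemma connected_set_image_solution:
  assumes "connected_atoms A T" "T \<subseteq> atoms_on A" "A \<noteq> {}" "f \<in> solutions E V A T"
  shows "connected_set E (f ` A)"
  unfolding connected_set_def
proof (intro conjI allI impI)
  show "f ` A \<noteq> {}" using assms(3) by simp
  fix W1 assume W1: "W1 \<subseteq> f ` A" "W1 \<noteq> {}" "W1 \<noteq> f ` A"
  let ?A1 = "{x\<in>A. f x \<in> W1}"
  have "?A1 \<subseteq> A" "?A1 \<noteq> {}" "?A1 \<noteq> A" using W1 by auto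
  then obtain a where a: "a \<in> T" "crosses ?A1 a" using assms(1) unfolding connected_atoms_def by blast
  moreover have "a \<in> atoms_on A" using a(1) assms(2) by auto
  ultimately obtain x y where xy: "atom_vars a = {x, y}" "x \<in> ?A1" "y \<in> A - ?A1"
    using crossesE by blast
  have "f x = f y \<or> {f x, f y} \<in> E"
    using satisfies_eq_or_adj[OF _ xy(1)] a(1) assms(4) unfolding solutions_def by auto
  then show "\<exists>x\<in>W1. \<exists>y\<in>f ` A - W1. {x, y} \<in> E" using xy by auto
qed

definition path_edges :: "nat \<Rightarrow> nat set set" where
  "path_edges u = {{i, Suc i} | i. Suc i < u}"

definition small_connected_sets_are_paths :: "nat \<Rightarrow> 'a set set \<Rightarrow> 'a set \<Rightarrow> bool" where
  "small_connected_sets_are_paths k E V \<longleftrightarrow>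
     (\<forall>W. W \<subseteq> V \<longrightarrow> connected_set E W \<longrightarrow> card W \<le> k \<longrightarrow>
        graph_iso {0..<card W} (path_edges (card W)) W E)"

lemma satisfies_comp_iso:
  assumes "inj_on \<beta> X" "\<forall>x\<in>X. \<forall>y\<in>X. {x, y} \<in> F \<longleftrightarrow> {\<beta> x, \<beta> y} \<in> E" "g ` atom_vars a \<subseteq> X"
  shows "satisfies E (\<beta> \<circ> g) a \<longleftrightarrow> satisfies F g a"
  using assms by (cases a) (auto simp: inj_on_eq_iff)

lemma card_onto_solutions_graph_iso:
  assumes iso: "graph_iso X F W E" and "W \<subseteq> V" "T \<subseteq> atoms_on A"
  shows "card {f \<in> solutions E V A T. f ` A = W} = card {g \<in> solutions F X A T. g ` A = X}"
proof -
  let ?G = "{g \<in> solutions F X A T. g ` A = X}" and ?H = "{f \<in> solutions E V A T. f ` A = W}"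
  obtain \<beta> where \<beta>: "bij_betw \<beta> X W" "\<forall>x\<in>X. \<forall>y\<in>X. {x, y} \<in> F \<longleftrightarrow> {\<beta> x, \<beta> y} \<in> E"
    using iso unfolding graph_iso_def by blast
  let ?\<gamma> = "inv_into X \<beta>"
  have \<gamma>: "bij_betw ?\<gamma> W X" using \<beta>(1) by (rule bij_betw_inv_into)
  have inj: "inj_on \<beta> X" using \<beta>(1) by (rule bij_betw_imp_inj_on)
  have sat: "satisfies E (restrict (\<beta> \<circ> g) A) a \<longleftrightarrow> satisfies F g a" if "g ` A \<subseteq> X" "a \<in> T" for g a
  proof -
    have "a \<in> atoms_on A" using that(2) assms(3) by auto
    then show ?thesis
      using satisfies_restrict satisfies_comp_iso[OF inj \<beta>(2)] that(1) unfolding atoms_on_def by blast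
  qed
  have \<beta>\<gamma>: "restrict (\<beta> \<circ> restrict (?\<gamma> \<circ> f) A) A = f" if "f \<in> ?H" for f
    using that \<beta>(1) by (auto simp: solutions_def fun_eq_iff PiE_def extensional_def bij_betw_inv_into_right)
  have "bij_betw (\<lambda>g. restrict (\<beta> \<circ> g) A) ?G ?H"
  proof (rule bij_betw_byWitness[where f' = "\<lambda>f. restrict (?\<gamma> \<circ> f) A"])
    show "\<forall>g\<in>?G. restrict (?\<gamma> \<circ> restrict (\<beta> \<circ> g) A) A = g"
      using inj by (auto simp: solutions_def fun_eq_iff PiE_def extensional_def)
    show "\<forall>f\<in>?H. restrict (\<beta> \<circ> restrict (?\<gamma> \<circ> f) A) A = f"
      using \<beta>\<gamma> by blast
    have "restrict (\<beta> \<circ> g) A \<in> ?H" if "g \<in> ?G" for g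
    proof -
      have "g ` A = X" using that by simp
      then have "(\<beta> \<circ> g) ` A = W" using \<beta>(1) by (metis bij_betw_def image_comp)
      then show ?thesis using that sat assms(2) by (auto simp: solutions_def)
    qed
    then show "(\<lambda>g. restrict (\<beta> \<circ> g) A) ` ?G \<subseteq> ?H" by blast
    have "restrict (?\<gamma> \<circ> f) A \<in> ?G" if "f \<in> ?H" for f
    proof -
      have "f ` A = W" using that by simp
      then have "(?\<gamma> \<circ> f) ` A = X" using \<gamma> by (metis bij_betw_def image_comp)
      then show ?thesis using that sat[of "restrict (?\<gamma> \<circ> f) A"] \<beta>\<gamma>[OF that]
        by (auto simp: solutions_def)
    qed
    then show "(\<lambda>f. restrict (?\<gamma> \<circ> f) A) ` ?H \<subseteq> ?G" by blast
  qed
  then show ?thesis by (rule bij_betw_same_card[symmetric])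
qed

lemma card_solutions_connected:
  assumes paths: "small_connected_sets_are_paths k E V" and "finite V"
    and A: "finite A" "A \<noteq> {}" "card A \<le> k" and T: "connected_atoms A T" "T \<subseteq> atoms_on A"
  shows "card (solutions E V A T) = (\<Sum>u = 1..card A. card (connected_sets E V u) *
           card {g \<in> solutions (path_edges u) {0..<u} A T. g ` A = {0..<u}})"
proof -
  let ?S = "solutions E V A T"
  let ?\<W> = "\<Union>u\<in>{1..card A}. connected_sets E V u"
  have "(\<lambda>f. f ` A) ` ?S \<subseteq> ?\<W>"
  proof clarify
    fix f assume f: "f \<in> ?S"
    then have "f ` A \<subseteq> V" "connected_set E (f ` A)"
      using connected_set_image_solution[OF T A(2)] by (auto simp: solutions_def)
    moreover have "1 \<le> card (f ` A)" "card (f ` A) \<le> card A"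
      using A(1,2) by (auto simp: card_image_le Suc_le_eq card_gt_0_iff)
    ultimately show "f ` A \<in> ?\<W>" unfolding connected_sets_def by auto
  qed
  then have "card ?S = (\<Sum>W\<in>?\<W>. card {f \<in> ?S. f ` A = W})"
    by (intro card_eq_sum_card_fibers finite_solutions finite_UN_I finite_connected_sets assms) auto
  also have "\<dots> = (\<Sum>u = 1..card A. \<Sum>W\<in>connected_sets E V u. card {f \<in> ?S. f ` A = W})"
    by (rule sum.UNION_disjoint) (auto simp: finite_connected_sets \<open>finite V\<close> connected_sets_def)
  also have "\<dots> = (\<Sum>u = 1..card A. card (connected_sets E V u) *
                     card {g \<in> solutions (path_edges u) {0..<u} A T. g ` A = {0..<u}})"
  proof (rule sum.cong[OF refl])
    fix u assume u: "u \<in> {1..card A}"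
    have "card {f \<in> ?S. f ` A = W} = card {g \<in> solutions (path_edges u) {0..<u} A T. g ` A = {0..<u}}"
      if W: "W \<in> connected_sets E V u" for W
    proof -
      have "graph_iso {0..<u} (path_edges u) W E"
        using W u paths A(3) unfolding small_connected_sets_are_paths_def connected_sets_def by auto
      then show ?thesis
        using card_onto_solutions_graph_iso W T(2) unfolding connected_sets_def by blast
    qed
    then show "(\<Sum>W\<in>connected_sets E V u. card {f \<in> ?S. f ` A = W}) = card (connected_sets E V u) *
                 card {g \<in> solutions (path_edges u) {0..<u} A T. g ` A = {0..<u}}"
      by simp
  qed
  finally show ?thesis by simp
qed

lemma card_solutions_eq_if_connected_set_counts_eq:
  assumes "small_connected_sets_are_paths k E V" "finite V"
    and "small_connected_sets_are_paths k E' V'" "finite V'"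
    and counts: "\<And>u. 1 \<le> u \<Longrightarrow> u \<le> k \<Longrightarrow> card (connected_sets E V u) = card (connected_sets E' V' u)"
  shows "finite A \<Longrightarrow> card A \<le> k \<Longrightarrow> T \<subseteq> atoms_on A \<Longrightarrow>
           card (solutions E V A T) = card (solutions E' V' A T)"
proof (induction "card A" arbitrary: A T rule: less_induct)
  case less
  consider (empty) "A = {}" | (connected) "A \<noteq> {}" "connected_atoms A T"
    | (split) A1 where "A1 \<subseteq> A" "A1 \<noteq> {}" "A1 \<noteq> A" "\<forall>a\<in>T. \<not> crosses A1 a"
    unfolding connected_atoms_def by blast
  then show ?case
  proof cases
    case empty
    then show ?thesis
      using less.prems(3) atom_vars_nonempty by (auto simp: solutions_def atoms_on_def)
  next
    case connected
    note prems = less.prems(1) connected(1) less.prems(2) connected(2) less.prems(3)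
    show ?thesis
      using card_solutions_connected[OF assms(1,2) prems] card_solutions_connected[OF assms(3,4) prems]
        counts less.prems(2) by simp
  next
    case split
    have "finite A1" "finite (A - A1)" "card A1 < card A" "card (A - A1) < card A"
      using split less.prems(1) by (auto intro: finite_subset psubset_card_mono)
    then have IH: "card (solutions E V B (T \<inter> atoms_on B)) = card (solutions E' V' B (T \<inter> atoms_on B))"
      if "B \<in> {A1, A - A1}" for B
      using that less.prems(2) by (intro less.hyps) auto
    show ?thesis
      using IH[of A1] IH[of "A - A1"] card_solutions_split[OF split(1) less.prems(3) split(4), of E V]
        card_solutions_split[OF split(1) less.prems(3) split(4), of E' V'] by simp
  qed
qed

section \<open>Atomic types and the deck\<close>

definition atomic_type :: "'a set set \<Rightarrow> (nat \<Rightarrow> 'a) \<Rightarrow> nat set \<Rightarrow> atom set" where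
  "atomic_type E f A = {a \<in> atoms_on A. satisfies E f a}"

lemma card_eq_sum_card_atomic_type:
  assumes "finite A" "finite V"
  shows "card {f \<in> A \<rightarrow>\<^sub>E V. Q (atomic_type E f A)}
       = (\<Sum>S | S \<subseteq> atoms_on A \<and> Q S. card {f \<in> A \<rightarrow>\<^sub>E V. atomic_type E f A = S})"
proof -
  have "card {f \<in> A \<rightarrow>\<^sub>E V. Q (atomic_type E f A)}
      = (\<Sum>S | S \<subseteq> atoms_on A \<and> Q S. card {f \<in> {f \<in> A \<rightarrow>\<^sub>E V. Q (atomic_type E f A)}. atomic_type E f A = S})"
    by (rule card_eq_sum_card_fibers)
      (auto simp: assms finite_PiE finite_atoms_on atomic_type_def intro: finite_subset[of _ "Pow (atoms_on A)"])
  also have "\<dots> = (\<Sum>S | S \<subseteq> atoms_on A \<and> Q S. card {f \<in> A \<rightarrow>\<^sub>E V. atomic_type E f A = S})"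
    by (intro sum.cong refl arg_cong[where f = card]) auto
  finally show ?thesis .
qed

lemma solutions_eq_atomic_type:
  "T \<subseteq> atoms_on A \<Longrightarrow> solutions E V A T = {f \<in> A \<rightarrow>\<^sub>E V. T \<subseteq> atomic_type E f A}"
  unfolding solutions_def atomic_type_def by auto

lemma eq_if_superset_sums_eq:
  fixes f g :: "'a set \<Rightarrow> 'b::cancel_comm_monoid_add"
  assumes "finite U"
    and sums: "\<And>T. T \<subseteq> U \<Longrightarrow> (\<Sum>S | T \<subseteq> S \<and> S \<subseteq> U. f S) = (\<Sum>S | T \<subseteq> S \<and> S \<subseteq> U. g S)"
  shows "T \<subseteq> U \<Longrightarrow> f T = g T"
proof (induction "card (U - T)" arbitrary: T rule: less_induct)
  case less
  let ?above = "{S. T \<subset> S \<and> S \<subseteq> U}"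
  have fin: "finite ?above" by (rule finite_subset[of _ "Pow U"]) (use \<open>finite U\<close> in auto)
  have "{S. T \<subseteq> S \<and> S \<subseteq> U} = insert T ?above" using less.prems by auto
  moreover have "(\<Sum>S\<in>?above. f S) = (\<Sum>S\<in>?above. g S)"
  proof (rule sum.cong[OF refl])
    fix S assume S: "S \<in> ?above"
    then have "card (U - S) < card (U - T)" using \<open>finite U\<close> by (intro psubset_card_mono) auto
    then show "f S = g S" using less.hyps S by auto
  qed
  ultimately show "f T = g T" using sums[OF less.prems] fin by simp
qed

lemma card_atomic_type_eq_if_card_solutions_eq:
  assumes "finite A" "finite V" "finite V'"
    and sols: "\<And>T. T \<subseteq> atoms_on A \<Longrightarrow> card (solutions E V A T) = card (solutions E' V' A T)"
  shows "S \<subseteq> atoms_on A \<Longrightarrow>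
    card {f \<in> A \<rightarrow>\<^sub>E V. atomic_type E f A = S} = card {f \<in> A \<rightarrow>\<^sub>E V'. atomic_type E' f A = S}"
proof (rule eq_if_superset_sums_eq[OF finite_atoms_on[OF assms(1)]])
  fix T assume "T \<subseteq> atoms_on A"
  then show "(\<Sum>S | T \<subseteq> S \<and> S \<subseteq> atoms_on A. card {f \<in> A \<rightarrow>\<^sub>E V. atomic_type E f A = S})
           = (\<Sum>S | T \<subseteq> S \<and> S \<subseteq> atoms_on A. card {f \<in> A \<rightarrow>\<^sub>E V'. atomic_type E' f A = S})"
    using sols[of T] card_eq_sum_card_atomic_type[OF assms(1,2), of "\<lambda>S. T \<subseteq> S" E]
      card_eq_sum_card_atomic_type[OF assms(1,3), of "\<lambda>S. T \<subseteq> S" E']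
    by (simp add: solutions_eq_atomic_type conj_commute)
qed

lemma graph_iso_trans:
  assumes "graph_iso V1 E1 V2 E2" "graph_iso V2 E2 V3 E3"
  shows "graph_iso V1 E1 V3 E3"
proof -
  obtain f where f: "bij_betw f V1 V2" "\<forall>u\<in>V1. \<forall>v\<in>V1. {u, v} \<in> E1 \<longleftrightarrow> {f u, f v} \<in> E2"
    using assms(1) unfolding graph_iso_def by blast
  obtain g where g: "bij_betw g V2 V3" "\<forall>u\<in>V2. \<forall>v\<in>V2. {u, v} \<in> E2 \<longleftrightarrow> {g u, g v} \<in> E3"
    using assms(2) unfolding graph_iso_def by blast
  have "bij_betw (g \<circ> f) V1 V3" using f(1) g(1) by (rule bij_betw_trans)
  moreover have "\<forall>u\<in>V1. \<forall>v\<in>V1. {u, v} \<in> E1 \<longleftrightarrow> {(g \<circ> f) u, (g \<circ> f) v} \<in> E3"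
    using f g bij_betwE[OF f(1)] by auto
  ultimately show ?thesis unfolding graph_iso_def by blast
qed

lemma graph_iso_sym:
  assumes "graph_iso V1 E1 V2 E2"
  shows "graph_iso V2 E2 V1 E1"
proof -
  obtain f where f: "bij_betw f V1 V2" "\<forall>u\<in>V1. \<forall>v\<in>V1. {u, v} \<in> E1 \<longleftrightarrow> {f u, f v} \<in> E2"
    using assms unfolding graph_iso_def by blast
  let ?g = "inv_into V1 f"
  have g: "bij_betw ?g V2 V1" using f(1) by (rule bij_betw_inv_into)
  have "{x, y} \<in> E2 \<longleftrightarrow> {?g x, ?g y} \<in> E1" if "x \<in> V2" "y \<in> V2" for x y
    using f that bij_betwE[OF g] by (metis bij_betw_inv_into_right)
  then show ?thesis unfolding graph_iso_def using g by blast
qed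

lemma iso_class_eq_if_graph_iso:
  assumes "graph_iso V1 E1 V2 E2"
  shows "iso_class V1 E1 = iso_class V2 E2"
  unfolding iso_class_def
  using graph_iso_trans[OF assms] graph_iso_trans[OF graph_iso_sym[OF assms]] by blast

definition recorded_edges :: "atom set \<Rightarrow> nat set set" where
  "recorded_edges S = {{i, j} | i j. AAdj i j \<in> S}"

lemma iso_class_image_eq_recorded_edges:
  assumes "inj_on f A"
  shows "iso_class (f ` A) (induced_edges E (f ` A)) = iso_class A (recorded_edges (atomic_type E f A))"
proof (rule iso_class_eq_if_graph_iso[OF graph_iso_sym])
  have "{u, v} \<in> recorded_edges (atomic_type E f A) \<longleftrightarrow> {f u, f v} \<in> induced_edges E (f ` A)"
    if "u \<in> A" "v \<in> A" for u v
  proof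
    assume "{u, v} \<in> recorded_edges (atomic_type E f A)"
    then obtain i j where "{u, v} = {i, j}" "{f i, f j} \<in> E"
      unfolding recorded_edges_def atomic_type_def by auto
    then show "{f u, f v} \<in> induced_edges E (f ` A)"
      using that unfolding induced_edges_def by (auto simp: doubleton_eq_iff insert_commute)
  next
    assume "{f u, f v} \<in> induced_edges E (f ` A)"
    then have "AAdj u v \<in> atomic_type E f A"
      using that unfolding induced_edges_def atomic_type_def atoms_on_def by auto
    then show "{u, v} \<in> recorded_edges (atomic_type E f A)" unfolding recorded_edges_def by blast
  qed
  then show "graph_iso A (recorded_edges (atomic_type E f A)) (f ` A) (induced_edges E (f ` A))"
    unfolding graph_iso_def using assms inj_on_imp_bij_betw by blast
qed

lemma inj_on_iff_atomic_type: "inj_on f A \<longleftrightarrow> (\<forall>i j. AEq i j \<in> atomic_type E f A \<longrightarrow> i = j)"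
  unfolding inj_on_def atomic_type_def atoms_on_def by auto

lemma count_deck:
  assumes "finite V"
  shows "count (deck k V E) c = card {X. X \<subseteq> V \<and> card X = k \<and> iso_class X (induced_edges E X) = c}"
proof -
  have "finite {X. X \<subseteq> V \<and> card X = k}" by (rule finite_subset[of _ "Pow V"]) (use assms in auto)
  then show ?thesis
    unfolding deck_def count_image_mset by (simp add: Int_def) (rule arg_cong[where f = card], blast)
qed

lemma card_injective_labellings:
  assumes "finite V"
  shows "card {f \<in> {0..<k} \<rightarrow>\<^sub>E V. inj_on f {0..<k} \<and> P (f ` {0..<k})}
       = fact k * card {X. X \<subseteq> V \<and> card X = k \<and> P X}"
proof -
  let ?A = "{0..<k}"
  let ?S = "{f \<in> ?A \<rightarrow>\<^sub>E V. inj_on f ?A \<and> P (f ` ?A)}"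
  let ?\<X> = "{X. X \<subseteq> V \<and> card X = k \<and> P X}"
  have "finite ?S" by (rule finite_subset[of _ "?A \<rightarrow>\<^sub>E V"]) (auto simp: assms finite_PiE)
  moreover have "finite ?\<X>" by (rule finite_subset[of _ "Pow V"]) (use assms in auto)
  moreover have "(\<lambda>f. f ` ?A) ` ?S \<subseteq> ?\<X>" by (auto simp: card_image)
  ultimately have "card ?S = (\<Sum>X\<in>?\<X>. card {f \<in> ?S. f ` ?A = X})"
    by (rule card_eq_sum_card_fibers)
  also have "\<dots> = (\<Sum>X\<in>?\<X>. fact k)"
  proof (rule sum.cong[OF refl])
    fix X assume X: "X \<in> ?\<X>"
    then have "finite X" using assms by (auto intro: finite_subset)
    have "f ` ?A = X" if "f \<in> ?A \<rightarrow>\<^sub>E X" "inj_on f ?A" for f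
      using that X \<open>finite X\<close> by (intro card_subset_eq) (auto simp: card_image)
    then have "{f \<in> ?S. f ` ?A = X} = {f \<in> ?A \<rightarrow>\<^sub>E X. inj_on f ?A}"
      using X by auto
    also have "card \<dots> = fact k"
      using card_inj_on_subset_funcset[of ?A X ?A] X \<open>finite X\<close> by (simp add: fact_prod_rev)
    finally show "card {f \<in> ?S. f ` ?A = X} = fact k" .
  qed
  finally show ?thesis by simp
qed

lemma deck_eq_if_card_atomic_type_eq:
  assumes "finite V" "finite V'"
    and types: "\<And>S. S \<subseteq> atoms_on {0..<k} \<Longrightarrow>
      card {f \<in> {0..<k} \<rightarrow>\<^sub>E V. atomic_type E f {0..<k} = S}
        = card {f \<in> {0..<k} \<rightarrow>\<^sub>E V'. atomic_type E' f {0..<k} = S}"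
  shows "deck k V E = deck k V' E'"
proof (rule multiset_eqI)
  fix c
  let ?A = "{0..<k::nat}"
  define Q where "Q S \<longleftrightarrow> (\<forall>i j. AEq i j \<in> S \<longrightarrow> i = j) \<and> iso_class ?A (recorded_edges S) = c" for S
  \<comment> \<open>A k-subset of class c is the image of exactly \<open>k!\<close> injective labellings, and both
      injectivity and the class of the image are read off the atomic type.\<close>
  have labellings: "fact k * count (deck k W F) c
      = (\<Sum>S | S \<subseteq> atoms_on ?A \<and> Q S. card {f \<in> ?A \<rightarrow>\<^sub>E W. atomic_type F f ?A = S})"
    if "finite W" for W :: "'c set" and F
  proof -
    have "inj_on f ?A \<and> iso_class (f ` ?A) (induced_edges F (f ` ?A)) = c \<longleftrightarrow> Q (atomic_type F f ?A)" for f
      unfolding Q_def inj_on_iff_atomic_type[of f ?A F, symmetric]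
      using iso_class_image_eq_recorded_edges[of f ?A F] by auto
    then have "{f \<in> ?A \<rightarrow>\<^sub>E W. inj_on f ?A \<and> iso_class (f ` ?A) (induced_edges F (f ` ?A)) = c}
        = {f \<in> ?A \<rightarrow>\<^sub>E W. Q (atomic_type F f ?A)}"
      by simp
    then show ?thesis
      using card_injective_labellings[OF that, of k "\<lambda>X. iso_class X (induced_edges F X) = c"]
        card_eq_sum_card_atomic_type[of ?A W Q F] that by (simp add: count_deck)
  qed
  have "fact k * count (deck k V E) c = fact k * count (deck k V' E') c"
    unfolding labellings[OF assms(1)] labellings[OF assms(2)] using types by (intro sum.cong) auto
  then show "count (deck k V E) c = count (deck k V' E') c" by simp
qed

theorem deck_eq_if_connected_set_counts_eq:
  assumes "small_connected_sets_are_paths k E V" "finite V"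
    and "small_connected_sets_are_paths k E' V'" "finite V'"
    and "\<And>u. 1 \<le> u \<Longrightarrow> u \<le> k \<Longrightarrow> card (connected_sets E V u) = card (connected_sets E' V' u)"
  shows "deck k V E = deck k V' E'"
proof (rule deck_eq_if_card_atomic_type_eq[OF assms(2,4)])
  fix S assume "S \<subseteq> atoms_on {0..<k}"
  then show "card {f \<in> {0..<k} \<rightarrow>\<^sub>E V. atomic_type E f {0..<k} = S}
           = card {f \<in> {0..<k} \<rightarrow>\<^sub>E V'. atomic_type E' f {0..<k} = S}"
    using card_solutions_eq_if_connected_set_counts_eq[OF assms]
    by (intro card_atomic_type_eq_if_card_solutions_eq) (auto simp: assms)
qed

section \<open>Connected sets of paths and cycles\<close>

lemma connected_set_chain:
  assumes W: "W = \<beta> ` {0..<u}" and "1 \<le> u" and chain: "\<And>t. Suc t < u \<Longrightarrow> {\<beta> t, \<beta> (Suc t)} \<in> F"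
  shows "connected_set F W"
  unfolding connected_set_def
proof (intro conjI allI impI)
  show "W \<noteq> {}" using assms(1,2) by auto
  fix W1 assume W1: "W1 \<subseteq> W" "W1 \<noteq> {}" "W1 \<noteq> W"
  show "\<exists>x\<in>W1. \<exists>y\<in>W - W1. {x, y} \<in> F"
  proof (rule ccontr)
    assume no_edge: "\<not> ?thesis"
    have step: "\<beta> t \<in> W1 \<longleftrightarrow> \<beta> (Suc t) \<in> W1" if "Suc t < u" for t
    proof -
      have "\<beta> t \<in> W" "\<beta> (Suc t) \<in> W" using that W by auto
      moreover have "{\<beta> (Suc t), \<beta> t} \<in> F" using chain[OF that] by (simp add: insert_commute)
      ultimately show ?thesis using no_edge chain[OF that] by blast
    qed
    have all_iff: "\<beta> t \<in> W1 \<longleftrightarrow> \<beta> 0 \<in> W1" if "t < u" for t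
      using that by (induction t) (simp_all add: step)
    show False
    proof (cases "\<beta> 0 \<in> W1")
      case True
      then have "W \<subseteq> W1" using all_iff W by auto
      then show False using W1 by blast
    next
      case False
      then have "W1 = {}" using all_iff W W1(1) by auto
      then show False using W1 by blast
    qed
  qed
qed

lemma mod_add_left_cancel_less:
  fixes L :: nat
  assumes "(b + t) mod L = (b + t') mod L" "t < L" "t' < L"
  shows "t = t'"
  using assms by (metis cong_def cong_add_lcancel_nat cong_less_modulus_unique_nat)

locale path_numbering =
  fixes \<nu> :: "nat \<Rightarrow> 'a" and L :: nat and C :: "'a set" and F :: "'a set set"
  assumes bij: "bij_betw \<nu> {0..<L} C"
    and adj_iff: "\<And>i j. i < L \<Longrightarrow> j < L \<Longrightarrow> {\<nu> i, \<nu> j} \<in> F \<longleftrightarrow> Suc i = j \<or> Suc j = i"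
begin

lemma inj: "inj_on \<nu> {0..<L}" and image: "\<nu> ` {0..<L} = C"
  using bij by (auto simp: bij_betw_def)

lemma connected_set_eq_segment:
  assumes "W \<subseteq> C" "connected_set F W"
  shows "\<exists>a. a + card W \<le> L \<and> W = \<nu> ` {a..<a + card W}"
proof -
  define I where "I = {i. i < L \<and> \<nu> i \<in> W}"
  have W_eq: "W = \<nu> ` I" using assms(1) image unfolding I_def by auto
  have "I \<noteq> {}" using W_eq assms(2) unfolding connected_set_def by auto
  have "finite I" unfolding I_def by (rule finite_subset[of _ "{..<L}"]) auto
  define a where "a = Min I"
  define b where "b = Max I"
  have ab: "a \<in> I" "b \<in> I"
    unfolding a_def b_def using \<open>finite I\<close> \<open>I \<noteq> {}\<close> by (rule Min_in, rule Max_in)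
  have bounds: "a \<le> i" "i \<le> b" if "i \<in> I" for i
    unfolding a_def b_def using \<open>finite I\<close> that by (rule Min_le, rule Max_ge)
  \<comment> \<open>A gap c would separate the part of W below c from the part above: no edge jumps over c.\<close>
  have no_gap: "c \<in> I" if "a \<le> c" "c \<le> b" for c
  proof (rule ccontr)
    assume c: "c \<notin> I"
    let ?W1 = "\<nu> ` {i\<in>I. i < c}"
    have "?W1 \<subseteq> W" "?W1 \<noteq> {}" using W_eq ab(1) that(1) c by (auto simp: le_less)
    moreover have "\<nu> b \<notin> ?W1"
    proof
      assume "\<nu> b \<in> ?W1"
      then obtain i where "i \<in> I" "i < c" "\<nu> i = \<nu> b" by auto
      then have "i = b" using inj ab(2) unfolding I_def by (auto dest: inj_onD)
      then show False using \<open>i < c\<close> that(2) by simp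
    qed
    then have "?W1 \<noteq> W" using ab(2) W_eq by auto
    ultimately obtain x y where "x \<in> ?W1" "y \<in> W - ?W1" "{x, y} \<in> F"
      using assms(2) unfolding connected_set_def by meson
    then obtain i j where ij: "i \<in> I" "i < c" "j \<in> I" "\<not> j < c" "{\<nu> i, \<nu> j} \<in> F"
      using W_eq by auto
    then have "c < j" using c by (cases "j = c") auto
    then show False using ij adj_iff[of i j] unfolding I_def by auto
  qed
  have I_eq: "I = {a..<Suc b}" using bounds no_gap by fastforce
  have "card W = card I"
    unfolding W_eq by (rule card_image) (rule inj_on_subset[OF inj], auto simp: I_def)
  then have "a + card W = Suc b" using I_eq ab bounds by simp
  moreover have "b < L" using ab(2) unfolding I_def by simp
  ultimately show ?thesis using W_eq I_eq by (intro exI[of _ a]) auto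
qed

lemma segment_eq_image: "\<nu> ` {a..<a + u} = (\<lambda>t. \<nu> (a + t)) ` {0..<u}"
  using image_image[of \<nu> "(+) a" "{0..<u}"] by (simp add: add.commute)

lemma segment_graph_iso:
  assumes "a + u \<le> L"
  shows "graph_iso {0..<u} (path_edges u) (\<nu> ` {a..<a + u}) F"
    and "card (\<nu> ` {a..<a + u}) = u"
proof -
  have inj_segment: "inj_on \<nu> {a..<a + u}" by (rule inj_on_subset[OF inj]) (use assms in auto)
  have "(\<lambda>t. \<nu> (a + t)) ` {0..<u} = \<nu> ` {a..<a + u}" by (rule segment_eq_image[symmetric])
  moreover have "inj_on (\<lambda>t. \<nu> (a + t)) {0..<u}"
  proof (rule inj_onI)
    fix s t assume "s \<in> {0..<u}" "t \<in> {0..<u}" "\<nu> (a + s) = \<nu> (a + t)"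
    then have "a + s = a + t" using inj_segment by (auto dest: inj_onD)
    then show "s = t" by simp
  qed
  ultimately have "bij_betw (\<lambda>t. \<nu> (a + t)) {0..<u} (\<nu> ` {a..<a + u})" by (simp add: bij_betw_def)
  moreover have "{s, t} \<in> path_edges u \<longleftrightarrow> {\<nu> (a + s), \<nu> (a + t)} \<in> F" if "s < u" "t < u" for s t
    using that assms adj_iff[of "a + s" "a + t"] unfolding path_edges_def by (auto simp: doubleton_eq_iff)
  ultimately show "graph_iso {0..<u} (path_edges u) (\<nu> ` {a..<a + u}) F"
    unfolding graph_iso_def by auto
  show "card (\<nu> ` {a..<a + u}) = u" using inj_segment by (simp add: card_image)
qed

lemma connected_set_segment:
  assumes "a + u \<le> L" "1 \<le> u"
  shows "connected_set F (\<nu> ` {a..<a + u})"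
proof (rule connected_set_chain[where \<beta> = "\<lambda>t. \<nu> (a + t)"])
  show "\<nu> ` {a..<a + u} = (\<lambda>t. \<nu> (a + t)) ` {0..<u}" by (rule segment_eq_image)
  show "{\<nu> (a + t), \<nu> (a + Suc t)} \<in> F" if "Suc t < u" for t
    using adj_iff[of "a + t" "a + Suc t"] that assms by simp
qed (use assms in auto)

lemma connected_set_graph_iso:
  assumes "W \<subseteq> C" "connected_set F W"
  shows "graph_iso {0..<card W} (path_edges (card W)) W F"
proof -
  obtain a where a: "a + card W \<le> L" "W = \<nu> ` {a..<a + card W}"
    using connected_set_eq_segment[OF assms] by blast
  have "graph_iso {0..<card W} (path_edges (card W)) (\<nu> ` {a..<a + card W}) F"
    by (rule segment_graph_iso(1)[OF a(1)])
  then show ?thesis unfolding a(2)[symmetric] .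
qed

lemma card_connected_sets:
  assumes "1 \<le> u"
  shows "card (connected_sets F C u) = L + 1 - u"
proof -
  have "connected_sets F C u = (\<lambda>a. \<nu> ` {a..<a + u}) ` {..<L + 1 - u}"
  proof
    show "connected_sets F C u \<subseteq> (\<lambda>a. \<nu> ` {a..<a + u}) ` {..<L + 1 - u}"
    proof
      fix W assume "W \<in> connected_sets F C u"
      then have W: "W \<subseteq> C" "connected_set F W" "card W = u" unfolding connected_sets_def by auto
      then obtain a where "a + u \<le> L" "W = \<nu> ` {a..<a + u}"
        using connected_set_eq_segment by blast
      then show "W \<in> (\<lambda>a. \<nu> ` {a..<a + u}) ` {..<L + 1 - u}" using assms by auto
    qed
    show "(\<lambda>a. \<nu> ` {a..<a + u}) ` {..<L + 1 - u} \<subseteq> connected_sets F C u"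
    proof clarify
      fix a assume "a < L + 1 - u"
      then have "a + u \<le> L" by simp
      then show "\<nu> ` {a..<a + u} \<in> connected_sets F C u"
        using connected_set_segment segment_graph_iso(2) image assms unfolding connected_sets_def by auto
    qed
  qed
  moreover have "inj_on (\<lambda>a. \<nu> ` {a..<a + u}) {..<L + 1 - u}"
  proof (rule inj_onI)
    fix a a' assume a: "a \<in> {..<L + 1 - u}" "a' \<in> {..<L + 1 - u}"
      and eq: "\<nu> ` {a..<a + u} = \<nu> ` {a'..<a' + u}"
    have "{a..<a + u} \<subseteq> {0..<L}" "{a'..<a' + u} \<subseteq> {0..<L}" using a by auto
    then have "{a..<a + u} = {a'..<a' + u}" using inj_on_image_eq_iff[OF inj] eq by blast
    then have "a \<in> {a'..<a' + u}" "a' \<in> {a..<a + u}" using assms by auto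
    then show "a = a'" by simp
  qed
  ultimately show ?thesis by (simp add: card_image)
qed

end

locale cycle_numbering =
  fixes \<nu> :: "nat \<Rightarrow> 'a" and L :: nat and C :: "'a set" and F :: "'a set set"
  assumes bij: "bij_betw \<nu> {0..<L} C"
    and adj_iff: "\<And>i j. i < L \<Longrightarrow> j < L \<Longrightarrow> {\<nu> i, \<nu> j} \<in> F \<longleftrightarrow> Suc i mod L = j \<or> Suc j mod L = i"
begin

lemma inj: "inj_on \<nu> {0..<L}" and image: "\<nu> ` {0..<L} = C"
  using bij by (auto simp: bij_betw_def)

lemma card_C: "card C = L"
  using bij by (simp add: bij_betw_same_card[symmetric])

definition arc :: "nat \<Rightarrow> nat \<Rightarrow> 'a set" where
  "arc b u = \<nu> ` ((\<lambda>t. (b + t) mod L) ` {0..<u})"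

lemma path_numbering_delete:
  assumes "z < L"
  shows "path_numbering (\<lambda>t. \<nu> ((z + 1 + t) mod L)) (L - 1) (C - {\<nu> z}) F"
proof
  let ?\<sigma> = "\<lambda>t. (z + 1 + t) mod L"
  let ?\<rho> = "\<lambda>t. \<nu> (?\<sigma> t)"
  have \<sigma>_less: "?\<sigma> t < L" for t using assms by simp
  have \<sigma>_last: "?\<sigma> (L - 1) = z" using assms by simp
  have \<rho>_inj: "inj_on ?\<rho> {0..<L - 1}"
  proof (rule inj_onI)
    fix s t assume "s \<in> {0..<L - 1}" "t \<in> {0..<L - 1}" "?\<rho> s = ?\<rho> t"
    then show "s = t" using inj \<sigma>_less mod_add_left_cancel_less[of "z + 1" s L t] by (auto dest: inj_onD)
  qed
  have "?\<rho> ` {0..<L - 1} \<subseteq> C - {\<nu> z}"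
  proof clarify
    fix t assume t: "t \<in> {0..<L - 1}"
    have "?\<sigma> t \<noteq> ?\<sigma> (L - 1)"
    proof
      assume "?\<sigma> t = ?\<sigma> (L - 1)"
      then have "t = L - 1" by (rule mod_add_left_cancel_less) (use t in auto)
      then show False using t by simp
    qed
    then have "?\<rho> t \<noteq> \<nu> z" using inj \<sigma>_less \<sigma>_last assms by (auto dest: inj_onD)
    then show "?\<rho> t \<in> C - {\<nu> z}" using image \<sigma>_less by auto
  qed
  moreover have "finite C" using image by auto
  moreover have "card (?\<rho> ` {0..<L - 1}) = card (C - {\<nu> z})"
  proof -
    have "\<nu> z \<in> C" using image assms by auto
    then show ?thesis using card_image[OF \<rho>_inj] card_C \<open>finite C\<close> by simp
  qed
  ultimately show "bij_betw ?\<rho> {0..<L - 1} (C - {\<nu> z})"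
    using \<rho>_inj by (simp add: bij_betw_def card_subset_eq)
  fix i j assume ij: "i < L - 1" "j < L - 1"
  have "Suc (?\<sigma> i) mod L = ?\<sigma> j \<longleftrightarrow> Suc i = j"
    using mod_add_left_cancel_less[of "z + 1" "Suc i" L j] ij by (auto simp: mod_Suc_eq)
  moreover have "Suc (?\<sigma> j) mod L = ?\<sigma> i \<longleftrightarrow> Suc j = i"
    using mod_add_left_cancel_less[of "z + 1" "Suc j" L i] ij by (auto simp: mod_Suc_eq)
  ultimately show "{?\<rho> i, ?\<rho> j} \<in> F \<longleftrightarrow> Suc i = j \<or> Suc j = i"
    using adj_iff[OF \<sigma>_less \<sigma>_less] by simp
qed

lemma segment_delete_eq_arc:
  "(\<lambda>t. \<nu> ((z + 1 + t) mod L)) ` {a..<a + u} = arc ((z + 1 + a) mod L) u"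
proof -
  have "{a..<a + u} = (+) a ` {0..<u}" by (simp add: add.commute)
  then have "(\<lambda>t. \<nu> ((z + 1 + t) mod L)) ` {a..<a + u} = (\<lambda>t. \<nu> ((z + 1 + (a + t)) mod L)) ` {0..<u}"
    by (simp only: image_image)
  also have "\<dots> = arc ((z + 1 + a) mod L) u"
    unfolding arc_def image_image by (simp add: mod_add_left_eq add.assoc)
  finally show ?thesis .
qed

lemma exists_outside:
  assumes "W \<subseteq> C" "card W < L"
  obtains z where "z < L" "\<nu> z \<notin> W"
proof -
  have "C \<noteq> W" using assms card_C by auto
  then obtain x where "x \<in> C" "x \<notin> W" using assms(1) by blast
  then obtain z where "z < L" "x = \<nu> z" using image by auto
  then show ?thesis using that \<open>x \<notin> W\<close> by blast
qed

lemma connected_set_eq_arc: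
  assumes "W \<subseteq> C" "connected_set F W" "card W = u" "u < L"
  shows "\<exists>b<L. W = arc b u"
proof -
  obtain z where z: "z < L" "\<nu> z \<notin> W" using exists_outside assms(1,3,4) by auto
  interpret rotation: path_numbering "\<lambda>t. \<nu> ((z + 1 + t) mod L)" "L - 1" "C - {\<nu> z}" F
    by (rule path_numbering_delete[OF z(1)])
  have "W \<subseteq> C - {\<nu> z}" using assms(1) z(2) by blast
  then obtain a where "W = (\<lambda>t. \<nu> ((z + 1 + t) mod L)) ` {a..<a + card W}"
    using rotation.connected_set_eq_segment assms(2) by blast
  then have "W = arc ((z + 1 + a) mod L) u" unfolding segment_delete_eq_arc assms(3) .
  moreover have "(z + 1 + a) mod L < L" using z(1) by simp
  ultimately show ?thesis by blast
qed

lemma connected_set_graph_iso: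
  assumes "W \<subseteq> C" "connected_set F W" "card W < L"
  shows "graph_iso {0..<card W} (path_edges (card W)) W F"
proof -
  obtain z where z: "z < L" "\<nu> z \<notin> W" using exists_outside assms(1,3) by auto
  interpret rotation: path_numbering "\<lambda>t. \<nu> ((z + 1 + t) mod L)" "L - 1" "C - {\<nu> z}" F
    by (rule path_numbering_delete[OF z(1)])
  have "W \<subseteq> C - {\<nu> z}" using assms(1) z(2) by blast
  then show ?thesis using rotation.connected_set_graph_iso assms(2) by blast
qed

lemma arc_connected_card:
  assumes "b < L" "1 \<le> u" "u < L"
  shows "connected_set F (arc b u)" "card (arc b u) = u"
proof -
  \<comment> \<open>The arc is an initial segment of the path left after deleting the predecessor of \<open>\<nu> b\<close>.\<close>
  define z where "z = (b + L - 1) mod L"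
  have "z < L" using assms(1) unfolding z_def by simp
  have "(z + 1 + 0) mod L = b"
    using assms(1) unfolding z_def by (simp add: mod_Suc_eq)
  then have arc_eq: "arc b u = (\<lambda>t. \<nu> ((z + 1 + t) mod L)) ` {0..<0 + u}"
    using segment_delete_eq_arc[of z 0 u] by simp
  interpret rotation: path_numbering "\<lambda>t. \<nu> ((z + 1 + t) mod L)" "L - 1" "C - {\<nu> z}" F
    by (rule path_numbering_delete[OF \<open>z < L\<close>])
  show "connected_set F (arc b u)"
    unfolding arc_eq using rotation.connected_set_segment[of 0 u] assms(2,3) by simp
  show "card (arc b u) = u"
    unfolding arc_eq using rotation.segment_graph_iso(2)[of 0 u] assms(3) by simp
qed

lemma inj_on_arc:
  assumes "1 \<le> u" "u < L"
  shows "inj_on (\<lambda>b. arc b u) {0..<L}"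
proof (rule inj_onI, rule ccontr)
  fix b b' assume b: "b \<in> {0..<L}" "b' \<in> {0..<L}" and eq: "arc b u = arc b' u" and "b \<noteq> b'"
  let ?I = "\<lambda>b. (\<lambda>t. (b + t) mod L) ` {0..<u}"
  have sub: "?I b \<subseteq> {0..<L}" "?I b' \<subseteq> {0..<L}" using b by auto
  have I_eq: "?I b = ?I b'"
    using eq unfolding arc_def by (rule iffD1[OF inj_on_image_eq_iff[OF inj sub]])
  have "(b' + 0) mod L \<in> ?I b'" using assms(1) by (intro imageI) simp
  then have "b' \<in> ?I b" using I_eq b(2) by simp
  then obtain t0 where t0: "t0 < u" "b' = (b + t0) mod L" by auto
  have "t0 \<noteq> 0" using t0(2) b(1) \<open>b \<noteq> b'\<close> by (cases "t0 = 0") simp_all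
  have "(b' + (L - 1)) mod L = (b + t0 + (L - 1)) mod L" using t0(2) by (simp add: mod_add_left_eq)
  also have "b + t0 + (L - 1) = (b + (t0 - 1)) + L" using \<open>t0 \<noteq> 0\<close> assms(2) by simp
  finally have "(b' + (L - 1)) mod L = (b + (t0 - 1)) mod L" by simp
  moreover have "(b + (t0 - 1)) mod L \<in> ?I b" using t0(1) by (intro imageI) simp
  ultimately have "(b' + (L - 1)) mod L \<in> ?I b'" using I_eq by simp
  then obtain t1 where t1: "t1 < u" "(b' + (L - 1)) mod L = (b' + t1) mod L" by auto
  from t1(2) have "L - 1 = t1" by (rule mod_add_left_cancel_less) (use t1(1) assms in auto)
  then show False using t1(1) assms(2) by simp
qed

lemma card_connected_sets:
  assumes "1 \<le> u" "u < L"
  shows "card (connected_sets F C u) = L"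
proof -
  have "connected_sets F C u = (\<lambda>b. arc b u) ` {0..<L}"
  proof
    show "connected_sets F C u \<subseteq> (\<lambda>b. arc b u) ` {0..<L}"
    proof
      fix W assume "W \<in> connected_sets F C u"
      then obtain b where "b < L" "W = arc b u"
        using connected_set_eq_arc assms(2) unfolding connected_sets_def by blast
      then show "W \<in> (\<lambda>b. arc b u) ` {0..<L}" by simp
    qed
    show "(\<lambda>b. arc b u) ` {0..<L} \<subseteq> connected_sets F C u"
    proof clarify
      fix b assume "b \<in> {0..<L}"
      then have "(\<lambda>t. (b + t) mod L) ` {0..<u} \<subseteq> {0..<L}" by auto
      then have "arc b u \<subseteq> C" unfolding arc_def using image by blast
      then show "arc b u \<in> connected_sets F C u"
        using arc_connected_card \<open>b \<in> {0..<L}\<close> assms unfolding connected_sets_def by simp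
    qed
  qed
  then show ?thesis using card_image[OF inj_on_arc[OF assms]] by simp
qed

end

lemma path_numbering_list:
  assumes "distinct vs" "F = {{vs ! i, vs ! (i + 1)} | i. i + 1 < length vs}"
  shows "path_numbering (nth vs) (length vs) (set vs) F"
proof
  show "bij_betw (nth vs) {0..<length vs} (set vs)"
    using assms(1) by (auto simp: bij_betw_def inj_on_nth set_conv_nth)
  fix i j assume ij: "i < length vs" "j < length vs"
  have "{vs ! i, vs ! j} = {vs ! t, vs ! (t + 1)} \<longleftrightarrow> (i = t \<and> j = t + 1) \<or> (i = t + 1 \<and> j = t)"
    if "t + 1 < length vs" for t
    using that ij nth_eq_iff_index_eq[OF assms(1)] by (auto simp: doubleton_eq_iff)
  then show "{vs ! i, vs ! j} \<in> F \<longleftrightarrow> Suc i = j \<or> Suc j = i"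
    using assms(2) ij by auto
qed

lemma card_path_list_edges:
  assumes "distinct vs" "F = {{vs ! i, vs ! (i + 1)} | i. i + 1 < length vs}"
  shows "card F = length vs - 1"
proof -
  have "F = (\<lambda>t. {vs ! t, vs ! (t + 1)}) ` {0..<length vs - 1}" using assms(2) by auto
  moreover have "inj_on (\<lambda>t. {vs ! t, vs ! (t + 1)}) {0..<length vs - 1}"
    by (rule inj_onI) (auto simp: doubleton_eq_iff nth_eq_iff_index_eq[OF assms(1)])
  ultimately show ?thesis by (simp add: card_image)
qed

lemma cycle_numbering_list:
  assumes "distinct vs" "F = {{vs ! i, vs ! ((i + 1) mod length vs)} | i. i < length vs}"
  shows "cycle_numbering (nth vs) (length vs) (set vs) F"
proof
  let ?L = "length vs"
  show "bij_betw (nth vs) {0..<?L} (set vs)"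
    using assms(1) by (auto simp: bij_betw_def inj_on_nth set_conv_nth)
  fix i j assume ij: "i < ?L" "j < ?L"
  have "{vs ! i, vs ! j} = {vs ! t, vs ! ((t + 1) mod ?L)} \<longleftrightarrow>
      (i = t \<and> j = (t + 1) mod ?L) \<or> (i = (t + 1) mod ?L \<and> j = t)"
    if "t < ?L" for t
  proof -
    have "(t + 1) mod ?L < ?L" by (rule mod_less_divisor) (use that in linarith)
    then show ?thesis using that ij nth_eq_iff_index_eq[OF assms(1)] by (auto simp: doubleton_eq_iff)
  qed
  then show "{vs ! i, vs ! j} \<in> F \<longleftrightarrow> Suc i mod ?L = j \<or> Suc j mod ?L = i"
    using assms(2) ij by auto
qed

lemma card_cycle_list_edges:
  assumes "distinct vs" "F = {{vs ! i, vs ! ((i + 1) mod length vs)} | i. i < length vs}" "3 \<le> length vs"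
  shows "card F = length vs"
proof -
  let ?L = "length vs"
  have "F = (\<lambda>t. {vs ! t, vs ! ((t + 1) mod ?L)}) ` {0..<?L}" using assms(2) by auto
  moreover have "inj_on (\<lambda>t. {vs ! t, vs ! ((t + 1) mod ?L)}) {0..<?L}"
  proof (rule inj_onI)
    fix s t assume st: "s \<in> {0..<?L}" "t \<in> {0..<?L}"
      and "{vs ! s, vs ! ((s + 1) mod ?L)} = {vs ! t, vs ! ((t + 1) mod ?L)}"
    moreover from st(1) have "0 < ?L" by (simp only: atLeastLessThan_iff) linarith
    then have "(s + 1) mod ?L < ?L" "(t + 1) mod ?L < ?L" by simp_all
    ultimately have "s = t \<or> (s = (t + 1) mod ?L \<and> t = (s + 1) mod ?L)"
      using st by (auto simp: doubleton_eq_iff nth_eq_iff_index_eq[OF assms(1)])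
    moreover have "(t + 2) mod ?L \<noteq> (t + 0) mod ?L"
    proof
      assume "(t + 2) mod ?L = (t + 0) mod ?L"
      then have "2 = (0::nat)" by (rule mod_add_left_cancel_less) (use assms(3) in auto)
      then show False by simp
    qed
    moreover have "t < ?L" using st(2) by simp
    ultimately show "s = t" by (auto simp: mod_Suc_eq)
  qed
  ultimately show ?thesis by (simp add: card_image)
qed

lemma is_pathE:
  assumes "is_path C F"
  obtains \<nu> where "path_numbering \<nu> (card C) C F" "card F + 1 = card C"
proof -
  obtain vs where vs: "distinct vs" "length vs \<ge> 1" "set vs = C"
    "F = {{vs ! i, vs ! (i + 1)} | i. i + 1 < length vs}"
    using assms unfolding is_path_def by (elim exE conjE) simp
  then have "length vs = card C" using distinct_card[OF vs(1)] by simp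
  then show ?thesis
    using that path_numbering_list[OF vs(1,4)] card_path_list_edges[OF vs(1,4)] vs(2,3) by simp
qed

lemma is_cycleE:
  assumes "is_cycle C F"
  obtains \<nu> where "cycle_numbering \<nu> (card C) C F" "card F = card C"
proof -
  obtain vs where vs: "distinct vs" "length vs \<ge> 3" "set vs = C"
    "F = {{vs ! i, vs ! ((i + 1) mod length vs)} | i. i < length vs}"
    using assms unfolding is_cycle_def by (elim exE conjE) simp
  then have "length vs = card C" using distinct_card[OF vs(1)] by simp
  then show ?thesis
    using that cycle_numbering_list[OF vs(1,4)] card_cycle_list_edges[OF vs(1,4,2)] vs(3) by simp
qed

lemma long_path_or_cycle_counts:
  fixes k :: nat
  assumes "(is_cycle C F \<and> k < card C) \<or> (is_path C F \<and> k - 1 \<le> card C)"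
  defines "\<delta> \<equiv> if is_cycle C F \<and> k < card C then 0 else 1 :: nat"
  shows "card F + \<delta> = card C"
    and "\<And>u. 1 \<le> u \<Longrightarrow> u \<le> k \<Longrightarrow> card (connected_sets F C u) + (u - 1) * \<delta> = card C"
    and "small_connected_sets_are_paths k F C"
proof -
  consider (cycle) "is_cycle C F" "k < card C" | (path) "\<not> (is_cycle C F \<and> k < card C)" "is_path C F" "k - 1 \<le> card C"
    using assms(1) by blast
  then have "card F + \<delta> = card C \<and>
      (\<forall>u. 1 \<le> u \<longrightarrow> u \<le> k \<longrightarrow> card (connected_sets F C u) + (u - 1) * \<delta> = card C) \<and>
      small_connected_sets_are_paths k F C"
  proof cases
    case cycle
    then obtain \<nu> where \<nu>: "cycle_numbering \<nu> (card C) C F" "card F = card C" by (blast elim: is_cycleE)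
    interpret cycle_numbering \<nu> "card C" C F by (rule \<nu>(1))
    show ?thesis
      using cycle \<nu>(2) card_connected_sets connected_set_graph_iso
      unfolding \<delta>_def small_connected_sets_are_paths_def by auto
  next
    case path
    then obtain \<nu> where \<nu>: "path_numbering \<nu> (card C) C F" "card F + 1 = card C" by (blast elim: is_pathE)
    interpret path_numbering \<nu> "card C" C F by (rule \<nu>(1))
    show ?thesis
      using path \<nu>(2) card_connected_sets connected_set_graph_iso
      unfolding \<delta>_def small_connected_sets_are_paths_def by auto
  qed
  then show "card F + \<delta> = card C"
    and "\<And>u. 1 \<le> u \<Longrightarrow> u \<le> k \<Longrightarrow> card (connected_sets F C u) + (u - 1) * \<delta> = card C"
    and "small_connected_sets_are_paths k F C"
    by blast+
qed

section \<open>Components\<close>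

lemma connected_set_induced_edges_iff:
  assumes "W \<subseteq> C"
  shows "connected_set (induced_edges E C) W \<longleftrightarrow> connected_set E W"
proof -
  have "(\<exists>x\<in>W1. \<exists>y\<in>W - W1. {x, y} \<in> induced_edges E C) \<longleftrightarrow> (\<exists>x\<in>W1. \<exists>y\<in>W - W1. {x, y} \<in> E)"
    if "W1 \<subseteq> W" for W1
    using that assms unfolding induced_edges_def by auto
  then show ?thesis unfolding connected_set_def by simp
qed

lemma graph_iso_induced_edges_iff:
  assumes "W \<subseteq> C"
  shows "graph_iso X F W (induced_edges E C) \<longleftrightarrow> graph_iso X F W E"
proof -
  have edge_iff: "{f u, f v} \<in> induced_edges E C \<longleftrightarrow> {f u, f v} \<in> E"
    if "bij_betw f X W" "u \<in> X" "v \<in> X" for f u v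
  proof -
    have "f u \<in> W" "f v \<in> W" using bij_betwE that by blast+
    then show ?thesis using assms unfolding induced_edges_def by auto
  qed
  show ?thesis
  proof
    assume "graph_iso X F W (induced_edges E C)"
    then obtain f where "bij_betw f X W" "\<forall>u\<in>X. \<forall>v\<in>X. {u, v} \<in> F \<longleftrightarrow> {f u, f v} \<in> induced_edges E C"
      unfolding graph_iso_def by blast
    then show "graph_iso X F W E" unfolding graph_iso_def using edge_iff by blast
  next
    assume "graph_iso X F W E"
    then obtain f where "bij_betw f X W" "\<forall>u\<in>X. \<forall>v\<in>X. {u, v} \<in> F \<longleftrightarrow> {f u, f v} \<in> E"
      unfolding graph_iso_def by blast
    then show "graph_iso X F W (induced_edges E C)" unfolding graph_iso_def using edge_iff by blast
  qed
qed

context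
  fixes V :: "'a set" and E :: "'a set set"
  assumes graph: "graph V E"
begin

private abbreviation reach :: "'a \<Rightarrow> 'a \<Rightarrow> bool" where
  "reach \<equiv> (adj E)\<^sup>*\<^sup>*"

lemma reach_sym: "reach x y \<Longrightarrow> reach y x"
proof -
  have "symp (adj E)" unfolding symp_def adj_def by (simp add: insert_commute)
  then show "reach x y \<Longrightarrow> reach y x" by (meson symp_rtranclp sympD)
qed

lemma components_disjoint:
  assumes "C1 \<in> components V E" "C2 \<in> components V E" "x \<in> C1" "x \<in> C2"
  shows "C1 = C2"
proof -
  obtain u1 u2 where C: "C1 = {v\<in>V. reach u1 v}" "C2 = {v\<in>V. reach u2 v}"
    using assms(1,2) unfolding components_def by auto
  then have "reach u1 x" "reach u2 x" using assms(3,4) by auto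
  then have "reach u1 v \<longleftrightarrow> reach u2 v" for v
    by (meson reach_sym rtranclp_trans)
  then show ?thesis using C by simp
qed

lemma component_subset: "C \<in> components V E \<Longrightarrow> C \<subseteq> V"
  unfolding components_def by auto

lemma finite_components: "finite (components V E)" and finite_component: "C \<in> components V E \<Longrightarrow> finite C"
proof -
  have "finite V" using graph unfolding graph_def by simp
  then show "finite (components V E)" unfolding components_def by simp
  show "C \<in> components V E \<Longrightarrow> finite C" using \<open>finite V\<close> component_subset finite_subset by blast
qed

lemma Union_components: "\<Union> (components V E) = V"
  unfolding components_def by auto

lemma edge_subset_component:
  assumes "e \<in> E" "C \<in> components V E" "e \<inter> C \<noteq> {}"
  shows "e \<subseteq> C"
proof -
  obtain x y where e: "e = {x, y}" using assms(1) graph unfolding graph_def by (meson card_2_iff)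
  obtain u where C: "C = {v\<in>V. reach u v}" using assms(2) unfolding components_def by auto
  have "e \<subseteq> V" using assms(1) graph unfolding graph_def by simp
  moreover have "adj E x y" "adj E y x" using assms(1) e unfolding adj_def by (auto simp: insert_commute)
  ultimately show ?thesis
    using assms(3) C e by (auto intro: rtranclp.rtrancl_into_rtrancl)
qed

lemma connected_set_subset_component:
  assumes "W \<subseteq> V" "connected_set E W"
  obtains C where "C \<in> components V E" "W \<subseteq> C"
proof -
  obtain w where "w \<in> W" using assms(2) unfolding connected_set_def by auto
  let ?C = "{v\<in>V. reach w v}"
  have C: "?C \<in> components V E" using \<open>w \<in> W\<close> assms(1) unfolding components_def by auto
  have "W \<subseteq> ?C"
  proof (rule ccontr)
    assume "\<not> W \<subseteq> ?C"
    then have "W \<inter> ?C \<subseteq> W" "W \<inter> ?C \<noteq> {}" "W \<inter> ?C \<noteq> W" using \<open>w \<in> W\<close> assms(1) by auto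
    then obtain x y where "x \<in> W \<inter> ?C" "y \<in> W - W \<inter> ?C" "{x, y} \<in> E"
      using assms(2) unfolding connected_set_def by meson
    then show False using edge_subset_component[OF _ C, of "{x, y}"] by auto
  qed
  then show ?thesis using that C by blast
qed

lemma card_UN_components:
  assumes "\<And>C. C \<in> components V E \<Longrightarrow> G C \<subseteq> Pow C - {{}}"
  shows "card (\<Union>C\<in>components V E. G C) = (\<Sum>C\<in>components V E. card (G C))"
proof (rule card_UN_disjoint[OF finite_components])
  show "\<forall>C\<in>components V E. finite (G C)"
  proof
    fix C assume C: "C \<in> components V E"
    have "G C \<subseteq> Pow C" using assms[OF C] by blast
    moreover have "finite (Pow C)" using finite_component[OF C] by simp
    ultimately show "finite (G C)" by (rule finite_subset)
  qed
  show "\<forall>C\<in>components V E. \<forall>C'\<in>components V E. C \<noteq> C' \<longrightarrow> G C \<inter> G C' = {}"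
  proof (intro ballI impI equals0I)
    fix C C' X assume C: "C \<in> components V E" "C' \<in> components V E" "C \<noteq> C'" and "X \<in> G C \<inter> G C'"
    then have "X \<subseteq> C" "X \<subseteq> C'" "X \<noteq> {}" using assms by blast+
    then obtain x where "x \<in> C" "x \<in> C'" by blast
    then show False using components_disjoint[OF C(1,2)] C(3) by blast
  qed
qed

lemma card_vertices_components: "card V = (\<Sum>C\<in>components V E. card C)"
proof -
  have "pairwise disjnt (components V E)"
    unfolding pairwise_def disjnt_def using components_disjoint by blast
  then have "card (\<Union> (components V E)) = (\<Sum>C\<in>components V E. card C)"
    using finite_component by (rule card_Union_disjoint)
  then show ?thesis by (simp only: Union_components)
qed

lemma card_edges_components: "card E = (\<Sum>C\<in>components V E. card (induced_edges E C))"
proof -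
  have "E = (\<Union>C\<in>components V E. induced_edges E C)"
  proof
    show "E \<subseteq> (\<Union>C\<in>components V E. induced_edges E C)"
    proof
      fix e assume e: "e \<in> E"
      then have "e \<subseteq> V" "card e = 2" using graph unfolding graph_def by auto
      then obtain x where "x \<in> e" by (cases "e = {}") auto
      then obtain C where C: "C \<in> components V E" "x \<in> C" using \<open>e \<subseteq> V\<close> Union_components by blast
      then have "e \<subseteq> C" using edge_subset_component[OF e C(1)] \<open>x \<in> e\<close> by blast
      then show "e \<in> (\<Union>C\<in>components V E. induced_edges E C)"
        by (intro UN_I[OF C(1)]) (simp add: induced_edges_def e)
    qed
  qed (auto simp: induced_edges_def)
  then have "card E = card (\<Union>C\<in>components V E. induced_edges E C)" by (rule arg_cong)
  also have "\<dots> = (\<Sum>C\<in>components V E. card (induced_edges E C))"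
  proof (rule card_UN_components)
    fix C
    show "induced_edges E C \<subseteq> Pow C - {{}}"
    proof
      fix e assume "e \<in> induced_edges E C"
      then have "e \<in> E" "e \<subseteq> C" unfolding induced_edges_def by auto
      moreover have "e \<noteq> {}" using \<open>e \<in> E\<close> graph unfolding graph_def by force
      ultimately show "e \<in> Pow C - {{}}" by simp
    qed
  qed
  finally show ?thesis .
qed

lemma card_connected_sets_components:
  "card (connected_sets E V u) = (\<Sum>C\<in>components V E. card (connected_sets (induced_edges E C) C u))"
proof -
  have "connected_sets E V u = (\<Union>C\<in>components V E. connected_sets (induced_edges E C) C u)"
  proof
    show "connected_sets E V u \<subseteq> (\<Union>C\<in>components V E. connected_sets (induced_edges E C) C u)"
    proof
      fix W assume "W \<in> connected_sets E V u"
      then have W: "W \<subseteq> V" "connected_set E W" "card W = u" unfolding connected_sets_def by auto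
      obtain C where C: "C \<in> components V E" "W \<subseteq> C"
        using W(1,2) by (rule connected_set_subset_component)
      then have "W \<in> connected_sets (induced_edges E C) C u"
        using W(2,3) connected_set_induced_edges_iff[OF C(2)] unfolding connected_sets_def by simp
      then show "W \<in> (\<Union>C\<in>components V E. connected_sets (induced_edges E C) C u)"
        using C(1) by blast
    qed
    show "(\<Union>C\<in>components V E. connected_sets (induced_edges E C) C u) \<subseteq> connected_sets E V u"
    proof clarify
      fix C W assume C: "C \<in> components V E" and "W \<in> connected_sets (induced_edges E C) C u"
      then have W: "W \<subseteq> C" "connected_set (induced_edges E C) W" "card W = u"
        unfolding connected_sets_def by auto
      then show "W \<in> connected_sets E V u"
        using component_subset[OF C] connected_set_induced_edges_iff[OF W(1)]
        unfolding connected_sets_def by auto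
    qed
  qed
  then have "card (connected_sets E V u) = card (\<Union>C\<in>components V E. connected_sets (induced_edges E C) C u)"
    by (rule arg_cong)
  also have "\<dots> = (\<Sum>C\<in>components V E. card (connected_sets (induced_edges E C) C u))"
    by (rule card_UN_components) (auto simp: connected_sets_def connected_set_def)
  finally show ?thesis .
qed

lemma small_connected_sets_are_paths_components:
  assumes "\<And>C. C \<in> components V E \<Longrightarrow> small_connected_sets_are_paths k (induced_edges E C) C"
  shows "small_connected_sets_are_paths k E V"
  unfolding small_connected_sets_are_paths_def
proof (intro allI impI)
  fix W assume W: "W \<subseteq> V" "connected_set E W" "card W \<le> k"
  obtain C where C: "C \<in> components V E" "W \<subseteq> C"
    using W(1,2) by (rule connected_set_subset_component)
  then have "connected_set (induced_edges E C) W" using W(2) connected_set_induced_edges_iff[OF C(2)] by simp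
  then have "graph_iso {0..<card W} (path_edges (card W)) W (induced_edges E C)"
    using assms[OF C(1)] C(2) W(3) unfolding small_connected_sets_are_paths_def by simp
  then show "graph_iso {0..<card W} (path_edges (card W)) W E"
    using graph_iso_induced_edges_iff[OF C(2)] by blast
qed

end

definition long_paths_and_cycles :: "nat \<Rightarrow> 'a set \<Rightarrow> 'a set set \<Rightarrow> bool" where
  "long_paths_and_cycles k V E \<longleftrightarrow> (\<forall>C\<in>components V E.
     (is_cycle C (induced_edges E C) \<and> card C > k) \<or> (is_path C (induced_edges E C) \<and> card C \<ge> k - 1))"

lemma long_paths_and_cycles_connected_set_counts:
  assumes "graph V E" "long_paths_and_cycles k V E"
  obtains P where "card E + P = card V"
    and "\<And>u. 1 \<le> u \<Longrightarrow> u \<le> k \<Longrightarrow> card (connected_sets E V u) + (u - 1) * P = card V"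
proof
  define \<delta> where "\<delta> C = (if is_cycle C (induced_edges E C) \<and> k < card C then 0 else 1 :: nat)" for C
  have comp: "(is_cycle C (induced_edges E C) \<and> k < card C) \<or> (is_path C (induced_edges E C) \<and> k - 1 \<le> card C)"
    if "C \<in> components V E" for C
    using assms(2) that unfolding long_paths_and_cycles_def by auto
  show "card E + (\<Sum>C\<in>components V E. \<delta> C) = card V"
    unfolding card_edges_components[OF assms(1)] card_vertices_components[OF assms(1)] sum.distrib[symmetric]
    using long_path_or_cycle_counts(1)[OF comp] by (simp add: \<delta>_def)
  show "card (connected_sets E V u) + (u - 1) * (\<Sum>C\<in>components V E. \<delta> C) = card V"
    if "1 \<le> u" "u \<le> k" for u
    unfolding card_connected_sets_components[OF assms(1)] card_vertices_components[OF assms(1)]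
      sum_distrib_left sum.distrib[symmetric]
    using long_path_or_cycle_counts(2)[OF comp that] by (simp add: \<delta>_def)
qed

lemma long_paths_and_cycles_small_connected_sets_are_paths:
  assumes "graph V E" "long_paths_and_cycles k V E"
  shows "small_connected_sets_are_paths k E V"
proof (rule small_connected_sets_are_paths_components[OF assms(1)])
  fix C assume "C \<in> components V E"
  then show "small_connected_sets_are_paths k (induced_edges E C) C"
    using assms(2) unfolding long_paths_and_cycles_def by (intro long_path_or_cycle_counts(3)) auto
qed

theorem theorem1p7:
  fixes k :: nat and V :: "'a set" and E :: "'a set set"
    and V' :: "'b set" and E' :: "'b set set"
  assumes "k \<ge> 1"
    and "graph V E" and "graph V' E'"
    and "max_degree_le V E 2" and "max_degree_le V' E' 2"
    and "card V = card V'" and "card E = card E'"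
    and "\<forall>C\<in>components V E.
           (is_cycle C (induced_edges E C) \<and> card C > k) \<or>
           (is_path C (induced_edges E C) \<and> card C \<ge> k - 1)"
    and "\<forall>C\<in>components V' E'.
           (is_cycle C (induced_edges E' C) \<and> card C > k) \<or>
           (is_path C (induced_edges E' C) \<and> card C \<ge> k - 1)"
  shows "deck k V E = deck k V' E'"
proof -
  have long: "long_paths_and_cycles k V E" "long_paths_and_cycles k V' E'"
    using assms(8,9) unfolding long_paths_and_cycles_def by auto
  obtain P where P: "card E + P = card V"
    "\<And>u. 1 \<le> u \<Longrightarrow> u \<le> k \<Longrightarrow> card (connected_sets E V u) + (u - 1) * P = card V"
    using long_paths_and_cycles_connected_set_counts[OF assms(2) long(1)] by blast
  obtain P' where P': "card E' + P' = card V'"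
    "\<And>u. 1 \<le> u \<Longrightarrow> u \<le> k \<Longrightarrow> card (connected_sets E' V' u) + (u - 1) * P' = card V'"
    using long_paths_and_cycles_connected_set_counts[OF assms(3) long(2)] by blast
  have "P = P'" using P(1) P'(1) assms(6,7) by simp
  then have counts: "card (connected_sets E V u) = card (connected_sets E' V' u)"
    if "1 \<le> u" "u \<le> k" for u
    using P(2)[OF that] P'(2)[OF that] assms(6) by simp
  have "finite V" "finite V'" using assms(2,3) unfolding graph_def by simp_all
  then show ?thesis
    by (intro deck_eq_if_connected_set_counts_eq counts long_paths_and_cycles_small_connected_sets_are_paths
        assms(2,3) long)
qed

end
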